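(* Let $D\in\mathbb{R}^{L\times N}$ have unit-norm columns, $L<N$, with every set of at most $k$ columns linearly independent, and let $\mu=\max_{1\le i\ne j\le N}|d_i^Td_j|$ be its coherence. Let $x\in\mathbb{R}^N$ be nonzero with at most $k$ nonzero entries, let $x_{\min}$ be the smallest magnitude of a nonzero entry of $x$, and let $y=Dx+w$ with $w\sim N(0,\sigma^2 I_L)$. Suppose that for some $\alpha>1$, $$x_{\min}(1-(2k-1)\mu)\ge 2\sigma\sqrt{2\alpha\log N}.$$ Then, with probability exceeding $$1-\frac{0.8/\sqrt2}{N^{\alpha-1}\sqrt{\alpha\log N}},$$ the OMP algorithm selects every index of the support of $x$ and $$\|\hat x_{\mathrm{OMP}}-x\|_2^2\le\frac{2\alpha}{(1-(k-1)\mu)^2}\,k\,\sigma^2\log N.$$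
   Context: $\log$ is the natural logarithm; $d_1,\dots,d_N$ are the columns of $D$. OMP algorithm: set $r^0=y$. For $\ell=1,\dots,k$: choose $i_\ell\in\arg\max_{1\le i\le N}|d_i^Tr^{\ell-1}|$ (ties arbitrary); let $x^\ell$ minimize $\|y-D\tilde x\|_2$ over vectors $\tilde x$ whose nonzero entries lie in $\{i_1,\dots,i_\ell\}$; set $r^\ell=y-Dx^\ell$. Output $\hat x_{\mathrm{OMP}}=x^k$. *)

theory Defs
  imports "HOL-Probability.Probability"
begin

definition coherence :: "real^'n^'l \<Rightarrow> real" where
  "coherence D = Max {\<bar>column i D \<bullet> column j D\<bar> | i j. i \<noteq> j}"

definition cols_indep_upto :: "real^'n^'l \<Rightarrow> nat \<Rightarrow> bool" where
  "cols_indep_upto D k \<longleftrightarrow>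
     (\<forall>S :: 'n set. card S \<le> k \<longrightarrow>
        inj_on (\<lambda>i. column i D) S \<and> independent ((\<lambda>i. column i D) ` S))"

definition xmin :: "real^'n \<Rightarrow> real" where
  "xmin x = Min {\<bar>x $ j\<bar> | j. x $ j \<noteq> 0}"

text \<open>A run of OMP with k iterations on data y: idx l is the index chosen at step l
  (l = 1..k, ties arbitrary), xs l is the least-squares estimate x^l on the chosen
  support; xs 0 = 0 so that the residual r^0 = y - D xs 0 = y. The output is xs k.\<close>
definition omp_run :: "real^'n^'l \<Rightarrow> real^'l \<Rightarrow> nat \<Rightarrow> (nat \<Rightarrow> 'n) \<Rightarrow> (nat \<Rightarrow> real^'n) \<Rightarrow> bool" where
  "omp_run D y k idx xs \<longleftrightarrow>
     xs 0 = 0 \<and>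
     (\<forall>l\<in>{1..k}.
        (\<forall>i. \<bar>column i D \<bullet> (y - D *v xs (l - 1))\<bar>
               \<le> \<bar>column (idx l) D \<bullet> (y - D *v xs (l - 1))\<bar>) \<and>
        (\<forall>j. j \<notin> idx ` {1..l} \<longrightarrow> xs l $ j = 0) \<and>
        (\<forall>z :: real^'n. (\<forall>j. j \<notin> idx ` {1..l} \<longrightarrow> z $ j = 0) \<longrightarrow>
            norm (y - D *v xs l) \<le> norm (y - D *v z)))"

end

theory Submission
  imports Defs "HOL-Real_Asymp.Real_Asymp"
begin

(* The proof separates probability from linear algebra.
   (1) Probability: every correlation d_i . w of a unit column with the noise is
       N(0, sigma^2), so by the Gaussian tail bound and a union bound over the N
       columns, with probability at least 1 - N * 2 sigma^2 phi(tau) / tau all of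
       them are smaller than tau = sigma sqrt(2 alpha log N) in absolute value; for
       this tau the failure probability is below (0.8/sqrt 2)/(N^(alpha-1) sqrt(alpha log N)).
   (2) Deterministic analysis: if all |d_i . w| < tau and
       x_min (1 - (2k-1) mu) >= 2 tau, then each OMP step picks a new index of the
       support (the largest remaining entry of x - x^(l-1) produces a residual
       correlation that beats every off-support column, by the coherence estimates),
       and the least-squares residual is orthogonal to the chosen columns.  Hence
       after k steps the support is found and a Gram-matrix lower bound plus
       Cauchy-Schwarz give ||x_OMP - x||^2 <= k tau^2 / (1 - (k-1) mu)^2.
   The main theorem combines (1) and (2). *)

subsection \<open>Gaussian tail bounds\<close>

text \<open>The Mills-ratio bound 2 sigma^2 phi(tau) / tau on P(|Z| >= tau) for Z ~ N(0, sigma^2),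
  where phi is the density of Z.\<close>
definition normal_tail_bound :: "real \<Rightarrow> real \<Rightarrow> real" where
  "normal_tail_bound \<sigma> \<tau> = 2 * (\<sigma>\<^sup>2 * normal_density 0 \<sigma> \<tau> / \<tau>)"

text \<open>The integral of t phi(t) / tau over [tau, infinity) is sigma^2 phi(tau) / tau,
  since -sigma^2 phi is an antiderivative of t phi(t).\<close>
lemma normal_density_weighted_tail:
  fixes \<sigma> \<tau> :: real
  assumes \<sigma>: "\<sigma> > 0" and \<tau>: "\<tau> > 0"
  shows "(\<integral>\<^sup>+t. ennreal (t * normal_density 0 \<sigma> t / \<tau>) * indicator {\<tau>..} t \<partial>lborel)
         = ennreal (\<sigma>\<^sup>2 * normal_density 0 \<sigma> \<tau> / \<tau>)"
proof -
  have "(\<integral>\<^sup>+t. ennreal (t * normal_density 0 \<sigma> t / \<tau>) * indicator {\<tau>..} t \<partial>lborel)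
       = ennreal (0 - (- \<sigma>\<^sup>2 * normal_density 0 \<sigma> \<tau> / \<tau>))"
  proof (rule nn_integral_FTC_atLeast[where F="\<lambda>t. - \<sigma>\<^sup>2 * normal_density 0 \<sigma> t / \<tau>"])
    show "(\<lambda>t. t * normal_density 0 \<sigma> t / \<tau>) \<in> borel_measurable borel" by measurable
    fix t :: real assume "\<tau> \<le> t"
    then show "0 \<le> t * normal_density 0 \<sigma> t / \<tau>" using \<tau> by simp
    show "((\<lambda>t. - \<sigma>\<^sup>2 * normal_density 0 \<sigma> t / \<tau>) has_real_derivative
            t * normal_density 0 \<sigma> t / \<tau>) (at t)"
      unfolding normal_density_def
      using \<sigma> \<tau> by (auto intro!: derivative_eq_intros simp: field_simps power2_eq_square)
  next
    have "filterlim (\<lambda>t::real. - (t - 0)\<^sup>2 / (2 * \<sigma>\<^sup>2)) at_bot at_top"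
      using \<sigma> by real_asymp
    then have "((\<lambda>t. exp (- (t - 0)\<^sup>2 / (2 * \<sigma>\<^sup>2))) \<longlongrightarrow> 0) at_top"
      by (rule filterlim_compose[OF exp_at_bot])
    then have "((\<lambda>t. - \<sigma>\<^sup>2 * (1 / sqrt (2 * pi * \<sigma>\<^sup>2)) * exp (- (t - 0)\<^sup>2 / (2 * \<sigma>\<^sup>2)) / \<tau>)
         \<longlongrightarrow> - \<sigma>\<^sup>2 * (1 / sqrt (2 * pi * \<sigma>\<^sup>2)) * 0 / \<tau>) at_top"
      by (intro tendsto_intros) (use \<tau> in auto)
    then show "((\<lambda>t. - \<sigma>\<^sup>2 * normal_density 0 \<sigma> t / \<tau>) \<longlongrightarrow> 0) at_top"
      unfolding normal_density_def by (simp add: mult.assoc)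
  qed
  then show ?thesis by simp
qed

text \<open>Two-sided tail: on |t| >= tau the density is dominated by |t| phi(t) / tau, and
  the density is symmetric.\<close>
lemma normal_density_two_sided_tail:
  fixes \<sigma> \<tau> :: real
  assumes \<sigma>: "\<sigma> > 0" and \<tau>: "\<tau> > 0"
  shows "(\<integral>\<^sup>+t. ennreal (normal_density 0 \<sigma> t) * indicator {t. \<tau> \<le> \<bar>t\<bar>} t \<partial>lborel)
         \<le> ennreal (normal_tail_bound \<sigma> \<tau>)"
proof -
  define h where "h = (\<lambda>t. ennreal (t * normal_density 0 \<sigma> t / \<tau>) * indicator {\<tau>..} t)"
  have h_meas[measurable]: "h \<in> borel_measurable borel" unfolding h_def by measurable
  have symmetric: "normal_density 0 \<sigma> (- t) = normal_density 0 \<sigma> t" for t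
    unfolding normal_density_def by simp
  have dominated: "normal_density 0 \<sigma> t \<le> s * normal_density 0 \<sigma> s / \<tau>"
    if "\<tau> \<le> s" "\<bar>t\<bar> = s" for s t
  proof -
    have "normal_density 0 \<sigma> s = normal_density 0 \<sigma> t"
      using that symmetric[of t] by (cases "t \<ge> 0") auto
    then show ?thesis
      using that \<tau> mult_right_mono[OF that(1) normal_density_nonneg[of 0 \<sigma> s]]
      by (simp add: field_simps)
  qed
  have pointwise: "ennreal (normal_density 0 \<sigma> t) * indicator {t. \<tau> \<le> \<bar>t\<bar>} t \<le> h t + h (- t)" for t
  proof (cases "\<tau> \<le> \<bar>t\<bar>")
    case True
    show ?thesis
    proof (cases "t \<ge> 0")
      case True
      then have "ennreal (normal_density 0 \<sigma> t) \<le> h t"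
        using \<open>\<tau> \<le> \<bar>t\<bar>\<close> dominated[of t t] by (simp add: h_def ennreal_leI)
      then show ?thesis using \<open>\<tau> \<le> \<bar>t\<bar>\<close> by (simp add: add_increasing2)
    next
      case False
      then have "ennreal (normal_density 0 \<sigma> t) \<le> h (- t)"
        using \<open>\<tau> \<le> \<bar>t\<bar>\<close> dominated[of "- t" t] by (simp add: h_def ennreal_leI)
      then show ?thesis using \<open>\<tau> \<le> \<bar>t\<bar>\<close> by (simp add: add_increasing)
    qed
  qed simp
  have "(\<integral>\<^sup>+t. ennreal (normal_density 0 \<sigma> t) * indicator {t. \<tau> \<le> \<bar>t\<bar>} t \<partial>lborel)
        \<le> (\<integral>\<^sup>+t. h t + h (- t) \<partial>lborel)"
    by (intro nn_integral_mono pointwise)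
  also have "\<dots> = (\<integral>\<^sup>+t. h t \<partial>lborel) + (\<integral>\<^sup>+t. h (- t) \<partial>lborel)"
    by (rule nn_integral_add) auto
  also have "(\<integral>\<^sup>+t. h (- t) \<partial>lborel) = (\<integral>\<^sup>+t. h t \<partial>lborel)"
    using nn_integral_real_affine[OF h_meas, of "-1" 0] by simp
  also have "(\<integral>\<^sup>+t. h t \<partial>lborel) = ennreal (\<sigma>\<^sup>2 * normal_density 0 \<sigma> \<tau> / \<tau>)"
    unfolding h_def by (rule normal_density_weighted_tail[OF \<sigma> \<tau>])
  also have "\<dots> + \<dots> = ennreal (normal_tail_bound \<sigma> \<tau>)"
    using \<tau> by (simp add: normal_tail_bound_def ennreal_plus[symmetric] del: ennreal_plus)
  finally show ?thesis .
qed

lemma normal_tail_probability: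
  assumes "prob_space M" and \<sigma>: "\<sigma> > 0" and \<tau>: "\<tau> > 0"
    and Z: "distributed M lborel Z (normal_density 0 \<sigma>)"
  shows "measure M {\<omega> \<in> space M. \<tau> \<le> \<bar>Z \<omega>\<bar>} \<le> normal_tail_bound \<sigma> \<tau>"
proof -
  interpret prob_space M by fact
  have Z_meas[measurable]: "Z \<in> borel_measurable M"
    using distributed_measurable[OF Z] by simp
  have tail_set: "{t::real. \<tau> \<le> \<bar>t\<bar>} \<in> sets lborel" by measurable
  have "emeasure M {\<omega> \<in> space M. \<tau> \<le> \<bar>Z \<omega>\<bar>} = emeasure M (Z -` {t. \<tau> \<le> \<bar>t\<bar>} \<inter> space M)"
    by (rule arg_cong[where f="emeasure M"]) auto
  also have "\<dots> = (\<integral>\<^sup>+t. ennreal (normal_density 0 \<sigma> t) * indicator {t. \<tau> \<le> \<bar>t\<bar>} t \<partial>lborel)"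
    by (rule distributed_emeasure[OF Z tail_set])
  also have "\<dots> \<le> ennreal (normal_tail_bound \<sigma> \<tau>)"
    by (rule normal_density_two_sided_tail[OF \<sigma> \<tau>])
  finally show ?thesis
    using \<tau> by (simp add: emeasure_eq_measure normal_tail_bound_def)
qed

lemma unit_inner_self: "norm c = 1 \<Longrightarrow> c \<bullet> c = 1"
  by (metis power2_norm_eq_inner power_one)

text \<open>The projection of an isotropic Gaussian vector onto a unit vector is again
  N(0, sigma^2): it is a sum of independent Gaussians whose variances sum to sigma^2.\<close>
lemma unit_projection_normal:
  fixes W :: "'a \<Rightarrow> real^'l" and c :: "real^'l"
  assumes "prob_space M" and \<sigma>: "\<sigma> > 0"
    and W_indep: "prob_space.indep_vars M (\<lambda>_. borel) (\<lambda>i \<omega>. W \<omega> $ i) UNIV"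
    and W_normal: "\<forall>i. distributed M lborel (\<lambda>\<omega>. W \<omega> $ i) (normal_density 0 \<sigma>)"
    and c: "norm c = 1"
  shows "distributed M lborel (\<lambda>\<omega>. c \<bullet> W \<omega>) (normal_density 0 \<sigma>)"
proof -
  interpret prob_space M by fact
  define I where "I = {l. c $ l \<noteq> 0}"
  have restrict: "(\<Sum>l\<in>I. f l) = (\<Sum>l\<in>UNIV. f l)" if "\<And>l. c $ l = 0 \<Longrightarrow> f l = 0" for f :: "'l \<Rightarrow> real"
    by (rule sum.mono_neutral_left) (auto simp: I_def that)
  have "(\<Sum>l\<in>I. (c $ l)\<^sup>2) = c \<bullet> c"
    by (simp add: restrict inner_vec_def power2_eq_square)
  then have sum_sq: "(\<Sum>l\<in>I. (c $ l)\<^sup>2) = 1"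
    using c by (simp add: unit_inner_self)
  then have "I \<noteq> {}" by auto
  have indep: "indep_vars (\<lambda>_. borel) (\<lambda>l \<omega>. c $ l * W \<omega> $ l) I"
    using indep_vars_subset[OF indep_vars_compose2[OF W_indep, of "\<lambda>l t. c $ l * t" "\<lambda>_. borel"]]
    by auto
  have scaled: "distributed M lborel (\<lambda>\<omega>. c $ l * W \<omega> $ l) (normal_density 0 (\<bar>c $ l\<bar> * \<sigma>))"
    if "l \<in> I" for l
    using normal_density_affine[OF W_normal[rule_format, of l] \<sigma>, of "c $ l" 0] that
    by (simp add: I_def)
  have "distributed M lborel (\<lambda>\<omega>. \<Sum>l\<in>I. c $ l * W \<omega> $ l)
        (normal_density (\<Sum>l\<in>I. 0) (sqrt (\<Sum>l\<in>I. (\<bar>c $ l\<bar> * \<sigma>)\<^sup>2)))"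
    by (rule sum_indep_normal[OF _ \<open>I \<noteq> {}\<close> indep]) (use \<sigma> in \<open>auto simp: I_def intro: scaled\<close>)
  moreover have "(\<Sum>l\<in>I. (\<bar>c $ l\<bar> * \<sigma>)\<^sup>2) = \<sigma>\<^sup>2"
    using sum_sq by (simp add: power_mult_distrib sum_distrib_right[symmetric])
  moreover have "(\<lambda>\<omega>. \<Sum>l\<in>I. c $ l * W \<omega> $ l) = (\<lambda>\<omega>. c \<bullet> W \<omega>)"
    by (simp add: restrict inner_vec_def)
  ultimately show ?thesis using \<sigma> by simp
qed

lemma noise_correlations_bounded:
  fixes D :: "real^'n^'l" and W :: "'a \<Rightarrow> real^'l"
  assumes PS: "prob_space M" and \<sigma>: "\<sigma> > 0" and \<tau>: "\<tau> > 0"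
    and W_indep: "prob_space.indep_vars M (\<lambda>_. borel) (\<lambda>i \<omega>. W \<omega> $ i) UNIV"
    and W_normal: "\<forall>i. distributed M lborel (\<lambda>\<omega>. W \<omega> $ i) (normal_density 0 \<sigma>)"
    and unit_cols: "\<forall>i. norm (column i D) = 1"
  shows "\<exists>E \<in> sets M. 1 - real CARD('n) * normal_tail_bound \<sigma> \<tau> \<le> measure M E \<and>
           (\<forall>\<omega>\<in>E. \<forall>i. \<bar>column i D \<bullet> W \<omega>\<bar> < \<tau>)"
proof -
  interpret prob_space M by (rule PS)
  have Z: "distributed M lborel (\<lambda>\<omega>. column i D \<bullet> W \<omega>) (normal_density 0 \<sigma>)" for i
    by (rule unit_projection_normal[OF PS \<sigma> W_indep W_normal unit_cols[rule_format]])
  have [measurable]: "(\<lambda>\<omega>. column i D \<bullet> W \<omega>) \<in> borel_measurable M" for i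
    using distributed_measurable[OF Z] by simp
  define A where "A = (\<lambda>i. {\<omega> \<in> space M. \<tau> \<le> \<bar>column i D \<bullet> W \<omega>\<bar>})"
  have A_sets: "A i \<in> sets M" for i unfolding A_def by measurable
  define E where "E = space M - (\<Union>i. A i)"
  have "measure M (\<Union>i. A i) \<le> (\<Sum>i\<in>UNIV. measure M (A i))"
    by (rule finite_measure_subadditive_finite) (use A_sets in auto)
  also have "\<dots> \<le> real CARD('n) * normal_tail_bound \<sigma> \<tau>"
    using sum_bounded_above[of UNIV "\<lambda>i. measure M (A i)"]
      normal_tail_probability[OF PS \<sigma> \<tau> Z] by (simp add: A_def)
  finally have "1 - real CARD('n) * normal_tail_bound \<sigma> \<tau> \<le> measure M E"
    using prob_compl[of "\<Union>i. A i"] A_sets by (auto simp: E_def)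
  moreover have "E \<in> sets M" using A_sets by (auto simp: E_def)
  moreover have "\<forall>\<omega>\<in>E. \<forall>i. \<bar>column i D \<bullet> W \<omega>\<bar> < \<tau>"
    by (auto simp: E_def A_def not_le)
  ultimately show ?thesis by blast
qed

text \<open>For the threshold tau = sigma sqrt(2 alpha log N) the union bound is
  N^(1-alpha) / (sqrt pi sqrt(alpha log N)), and 1/sqrt pi < 0.8/sqrt 2.\<close>
lemma union_bound_at_threshold:
  fixes N \<sigma> \<alpha> \<tau> :: real
  assumes N: "N \<ge> 2" and \<sigma>: "\<sigma> > 0" and \<alpha>: "\<alpha> > 1"
    and \<tau>_def: "\<tau> = \<sigma> * sqrt (2 * \<alpha> * ln N)"
  shows "N * normal_tail_bound \<sigma> \<tau> < (0.8 / sqrt 2) / (N powr (\<alpha> - 1) * sqrt (\<alpha> * ln N))"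
proof -
  have "ln N > 0" using N by simp
  define A where "A = sqrt (\<alpha> * ln N)"
  define P where "P = N powr (\<alpha> - 1)"
  have A: "A > 0" unfolding A_def using \<alpha> \<open>ln N > 0\<close> by simp
  have P: "P > 0" unfolding P_def using N by simp
  have \<tau>_A: "\<tau> = \<sigma> * sqrt 2 * A"
    unfolding \<tau>_def A_def by (simp add: real_sqrt_mult mult.assoc)
  have gauss_factor: "exp (- (\<tau> - 0)\<^sup>2 / (2 * \<sigma>\<^sup>2)) = N powr (- \<alpha>)"
  proof -
    have "\<tau>\<^sup>2 = \<sigma>\<^sup>2 * (2 * \<alpha> * ln N)"
      unfolding \<tau>_def using \<alpha> \<open>ln N > 0\<close> by (simp add: power_mult_distrib)
    then have "- (\<tau> - 0)\<^sup>2 / (2 * \<sigma>\<^sup>2) = - \<alpha> * ln N" using \<sigma> by simp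
    then show ?thesis using N by (simp add: powr_def)
  qed
  have N_factor: "N * N powr (- \<alpha>) = 1 / P"
    unfolding P_def using N by (simp add: powr_diff powr_minus field_simps)
  have sqrt_factor: "sqrt (2 * pi * \<sigma>\<^sup>2) = sqrt 2 * sqrt pi * \<sigma>"
    using \<sigma> by (simp add: real_sqrt_mult)
  have "N * normal_tail_bound \<sigma> \<tau>
      = (N * N powr (- \<alpha>)) * (2 * \<sigma>\<^sup>2 / (sqrt 2 * sqrt pi * \<sigma> * (\<sigma> * sqrt 2 * A)))"
    unfolding normal_tail_bound_def normal_density_def gauss_factor sqrt_factor
    by (subst (1) \<tau>_A) (simp add: field_simps)
  also have "\<dots> = (1 / sqrt pi) / (P * A)"
    unfolding N_factor using \<sigma> A by (simp add: field_simps power2_eq_square)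
  finally have closed_form: "N * normal_tail_bound \<sigma> \<tau> = (1 / sqrt pi) / (P * A)" .
  have "sqrt 2 < 0.8 * sqrt pi"
  proof (rule power_less_imp_less_base)
    show "(sqrt 2)\<^sup>2 < (0.8 * sqrt pi)\<^sup>2"
      using pi_approx(1) by (simp add: power_mult_distrib power2_eq_square)
  qed simp
  then have "1 / sqrt pi < 0.8 / sqrt 2" by (simp add: field_simps)
  then have "(1 / sqrt pi) / (P * A) < (0.8 / sqrt 2) / (P * A)"
    using P A by (intro divide_strict_right_mono) auto
  then show ?thesis
    unfolding closed_form A_def[symmetric] P_def[symmetric] .
qed

subsection \<open>Linear algebra of sparse vectors\<close>

definition supported_on :: "'n set \<Rightarrow> real^'n \<Rightarrow> bool" where
  "supported_on S z \<longleftrightarrow> (\<forall>j. j \<notin> S \<longrightarrow> z $ j = 0)"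

lemma inner_matrix_vector_supported:
  fixes D :: "real^'n^'l"
  assumes "supported_on S z"
  shows "c \<bullet> (D *v z) = (\<Sum>j\<in>S. z $ j * (c \<bullet> column j D))"
proof -
  have "c \<bullet> (D *v z) = (\<Sum>j\<in>UNIV. z $ j * (c \<bullet> column j D))"
    by (simp add: matrix_mult_sum scalar_mult_eq_scaleR inner_sum_right)
  also have "\<dots> = (\<Sum>j\<in>S. z $ j * (c \<bullet> column j D))"
    by (rule sum.mono_neutral_right) (use assms in \<open>auto simp: supported_on_def\<close>)
  finally show ?thesis .
qed

lemma norm_supported_squared:
  assumes "supported_on S z"
  shows "(norm z)\<^sup>2 = (\<Sum>j\<in>S. (z $ j)\<^sup>2)"
proof -
  have "(norm z)\<^sup>2 = (\<Sum>j\<in>UNIV. (z $ j)\<^sup>2)"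
    unfolding power2_norm_eq_inner by (simp add: inner_vec_def power2_eq_square)
  also have "\<dots> = (\<Sum>j\<in>S. (z $ j)\<^sup>2)"
    by (rule sum.mono_neutral_right) (use assms in \<open>auto simp: supported_on_def\<close>)
  finally show ?thesis .
qed

text \<open>Normal equations: a least-squares fit over the columns in S leaves a residual
  orthogonal to each of these columns (otherwise moving along that column decreases
  the residual).\<close>
lemma least_squares_residual_orthogonal:
  fixes D :: "real^'n^'l"
  assumes unit: "norm (column i D) = 1"
    and z: "supported_on S z" and i: "i \<in> S"
    and optimal: "\<forall>z'. supported_on S z' \<longrightarrow> norm (y - D *v z) \<le> norm (y - D *v z')"
  shows "column i D \<bullet> (y - D *v z) = 0"
proof -
  define r where "r = y - D *v z"
  define a where "a = column i D \<bullet> r"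
  have "supported_on S (z + a *\<^sub>R axis i 1)"
    using z i by (auto simp: supported_on_def axis_def)
  then have "norm r \<le> norm (y - D *v (z + a *\<^sub>R axis i 1))"
    using optimal by (simp add: r_def)
  also have "y - D *v (z + a *\<^sub>R axis i 1) = r - a *\<^sub>R column i D"
    by (simp add: r_def matrix_vector_right_distrib matrix_vector_mult_scaleR matrix_vector_mult_basis)
  finally have "(norm r)\<^sup>2 \<le> (norm (r - a *\<^sub>R column i D))\<^sup>2"
    by (simp add: power_mono)
  also have "\<dots> = (norm r)\<^sup>2 - a * a"
    using unit_inner_self[OF unit]
    by (simp add: power2_norm_eq_inner inner_diff_left inner_diff_right a_def inner_commute algebra_simps)
  finally have "a * a \<le> 0" by simp
  then show ?thesis
    by (simp add: a_def r_def) (metis mult_eq_0_iff not_square_less_zero order_le_less)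
qed

text \<open>A small quadratic inequality: c n <= tau s together with s^2 <= k n gives
  n <= k tau^2 / c^2.  It turns the two energy estimates of the error into a bound.\<close>
lemma quadratic_energy_bound:
  fixes c n s \<tau> k :: real
  assumes c: "c > 0" and n: "0 \<le> n" and k: "0 \<le> k"
    and linear: "c * n \<le> \<tau> * s" and cauchy_schwarz: "s\<^sup>2 \<le> k * n"
  shows "n \<le> k * \<tau>\<^sup>2 / c\<^sup>2"
proof (cases "n = 0")
  case False
  have "(c * n)\<^sup>2 \<le> (\<tau> * s)\<^sup>2"
    using linear c n by (intro power_mono) auto
  also have "\<dots> = \<tau>\<^sup>2 * s\<^sup>2" by (simp add: power_mult_distrib)
  also have "\<dots> \<le> \<tau>\<^sup>2 * (k * n)" using cauchy_schwarz by (simp add: mult_left_mono)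
  finally have "(c\<^sup>2 * n) * n \<le> (k * \<tau>\<^sup>2) * n" by (simp add: power2_eq_square algebra_simps)
  then have "c\<^sup>2 * n \<le> k * \<tau>\<^sup>2" using n False by simp
  then show ?thesis using c by (simp add: field_simps)
qed (use k in simp)

subsection \<open>Dictionaries of bounded coherence\<close>

context
  fixes D :: "real^'n^'l" and \<mu> :: real
  assumes unit_cols: "\<forall>i. norm (column i D) = 1"
    and coherence_le: "\<forall>i j. i \<noteq> j \<longrightarrow> \<bar>column i D \<bullet> column j D\<bar> \<le> \<mu>"
    and mu_nonneg: "0 \<le> \<mu>"
begin

lemma cross_talk:
  assumes "supported_on S z"
  shows "\<bar>column i D \<bullet> (D *v z) - z $ i\<bar> \<le> \<mu> * (\<Sum>j\<in>S - {i}. \<bar>z $ j\<bar>)"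
proof -
  have "supported_on (insert i S) z" using assms by (auto simp: supported_on_def)
  then have "column i D \<bullet> (D *v z) = (\<Sum>j\<in>insert i S. z $ j * (column i D \<bullet> column j D))"
    by (rule inner_matrix_vector_supported)
  also have "\<dots> = z $ i + (\<Sum>j\<in>S - {i}. z $ j * (column i D \<bullet> column j D))"
    using unit_inner_self[of "column i D"] unit_cols by (simp add: sum.insert_remove)
  finally have "\<bar>column i D \<bullet> (D *v z) - z $ i\<bar>
      = \<bar>\<Sum>j\<in>S - {i}. z $ j * (column i D \<bullet> column j D)\<bar>" by simp
  also have "\<dots> \<le> (\<Sum>j\<in>S - {i}. \<bar>z $ j\<bar> * \<mu>)"
    using coherence_le
    by (intro order_trans[OF sum_abs sum_mono]) (auto simp: abs_mult intro: mult_left_mono)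
  finally show ?thesis by (simp add: sum_distrib_left mult.commute)
qed

lemma correlation_at_largest_entry:
  assumes z: "supported_on S z" and card: "card S \<le> k"
    and i: "i \<in> S" and largest: "\<forall>j\<in>S. \<bar>z $ j\<bar> \<le> \<bar>z $ i\<bar>"
  shows "(1 - (real k - 1) * \<mu>) * \<bar>z $ i\<bar> \<le> \<bar>column i D \<bullet> (D *v z)\<bar>"
proof -
  have "(\<Sum>j\<in>S - {i}. \<bar>z $ j\<bar>) \<le> real (card (S - {i})) * \<bar>z $ i\<bar>"
    using largest by (intro sum_bounded_above) auto
  also have "\<dots> \<le> (real k - 1) * \<bar>z $ i\<bar>"
  proof -
    have "1 \<le> card S" using i by (auto simp: Suc_le_eq card_gt_0_iff)
    then show ?thesis using card i by (intro mult_right_mono) (auto simp: of_nat_diff)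
  qed
  finally have "\<mu> * (\<Sum>j\<in>S - {i}. \<bar>z $ j\<bar>) \<le> \<mu> * ((real k - 1) * \<bar>z $ i\<bar>)"
    using mu_nonneg by (rule mult_left_mono)
  then show ?thesis
    using cross_talk[OF z, of i] by (simp add: algebra_simps)
qed

lemma correlation_off_support:
  assumes z: "supported_on S z" and card: "card S \<le> k"
    and j: "j \<notin> S" and bound: "\<forall>i\<in>S. \<bar>z $ i\<bar> \<le> m" and m: "0 \<le> m"
  shows "\<bar>column j D \<bullet> (D *v z)\<bar> \<le> real k * \<mu> * m"
proof -
  have "(\<Sum>i\<in>S - {j}. \<bar>z $ i\<bar>) \<le> real (card S) * m"
    using j bound by (auto intro: sum_bounded_above)
  also have "\<dots> \<le> real k * m" using card m by (simp add: mult_right_mono)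
  finally have "\<mu> * (\<Sum>i\<in>S - {j}. \<bar>z $ i\<bar>) \<le> \<mu> * (real k * m)"
    using mu_nonneg by (rule mult_left_mono)
  then show ?thesis
    using cross_talk[OF z, of j] z j by (simp add: supported_on_def algebra_simps)
qed

text \<open>Lower bound for the Gram form on vectors with small support (a Gershgorin-type
  estimate combined with Cauchy-Schwarz for the l1-norm).\<close>
lemma gram_lower_bound:
  assumes z: "supported_on S z"
  shows "(1 - (real (card S) - 1) * \<mu>) * (\<Sum>j\<in>S. (z $ j)\<^sup>2) \<le> (D *v z) \<bullet> (D *v z)"
proof -
  define n where "n = (\<Sum>j\<in>S. (z $ j)\<^sup>2)"
  define s where "s = (\<Sum>j\<in>S. \<bar>z $ j\<bar>)"
  have termwise: "(z $ i)\<^sup>2 - \<mu> * (\<bar>z $ i\<bar> * (s - \<bar>z $ i\<bar>)) \<le> z $ i * ((D *v z) \<bullet> column i D)"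
    if "i \<in> S" for i
  proof -
    have "(\<Sum>j\<in>S - {i}. \<bar>z $ j\<bar>) = s - \<bar>z $ i\<bar>"
      unfolding s_def using that by (simp add: sum_diff1)
    then have "\<bar>z $ i\<bar> * \<bar>column i D \<bullet> (D *v z) - z $ i\<bar> \<le> \<bar>z $ i\<bar> * (\<mu> * (s - \<bar>z $ i\<bar>))"
      using cross_talk[OF z, of i] by (intro mult_left_mono) auto
    then show ?thesis
      by (simp add: inner_commute algebra_simps power2_eq_square abs_mult[symmetric] abs_le_iff)
  qed
  have "(\<Sum>i\<in>S. \<bar>z $ i\<bar> * (s - \<bar>z $ i\<bar>)) = (\<Sum>i\<in>S. \<bar>z $ i\<bar> * s - (z $ i)\<^sup>2)"
    by (simp add: right_diff_distrib power2_eq_square abs_mult_self_eq)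
  also have "\<dots> = s * s - n"
    by (simp add: sum_subtractf sum_distrib_right[symmetric] n_def s_def[symmetric])
  finally have "(\<Sum>i\<in>S. \<bar>z $ i\<bar> * (s - \<bar>z $ i\<bar>)) = s * s - n" .
  then have "n - \<mu> * (s * s - n) = (\<Sum>i\<in>S. (z $ i)\<^sup>2 - \<mu> * (\<bar>z $ i\<bar> * (s - \<bar>z $ i\<bar>)))"
    unfolding sum_subtractf sum_distrib_left[symmetric] n_def by simp
  also have "\<dots> \<le> (\<Sum>i\<in>S. z $ i * ((D *v z) \<bullet> column i D))"
    by (rule sum_mono) (rule termwise)
  also have "\<dots> = (D *v z) \<bullet> (D *v z)"
    by (rule inner_matrix_vector_supported[OF z, symmetric])
  finally have gram: "n - \<mu> * (s * s - n) \<le> (D *v z) \<bullet> (D *v z)" .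
  have "s\<^sup>2 \<le> n * card S"
    unfolding s_def n_def using sum_squared_le_sum_of_squares[of "\<lambda>j. \<bar>z $ j\<bar>" S] by simp
  then have "\<mu> * (s * s - n) \<le> \<mu> * (n * card S - n)"
    using mu_nonneg by (simp add: mult_left_mono power2_eq_square)
  with gram show ?thesis by (simp add: n_def[symmetric] algebra_simps)
qed

lemma margin_positive:
  assumes "0 < xm" and "0 < \<tau>" and "2 * \<tau> \<le> xm * (1 - (2 * real k - 1) * \<mu>)"
  shows "0 < 1 - (2 * real k - 1) * \<mu>" and "0 < 1 - (real k - 1) * \<mu>"
proof -
  show pos: "0 < 1 - (2 * real k - 1) * \<mu>"
    using assms mult_nonneg_nonpos[of xm "1 - (2 * real k - 1) * \<mu>"] by linarith
  have "1 - (real k - 1) * \<mu> = (1 - (2 * real k - 1) * \<mu>) + real k * \<mu>"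
    by (simp add: algebra_simps)
  moreover have "0 \<le> real k * \<mu>" using mu_nonneg by simp
  ultimately show "0 < 1 - (real k - 1) * \<mu>"
    using pos by linarith
qed

lemma greedy_choice_in_support:
  assumes z: "supported_on S z" and card: "card S \<le> k"
    and j0: "j0 \<in> S" and xm_le: "xm \<le> \<bar>z $ j0\<bar>" and xm_pos: "0 < xm"
    and noise: "\<forall>i. \<bar>column i D \<bullet> w\<bar> < \<tau>"
    and margin: "2 * \<tau> \<le> xm * (1 - (2 * real k - 1) * \<mu>)"
    and greedy: "\<forall>i. \<bar>column i D \<bullet> (D *v z + w)\<bar> \<le> \<bar>column l D \<bullet> (D *v z + w)\<bar>"
  shows "l \<in> S \<and> column l D \<bullet> (D *v z + w) \<noteq> 0"
proof -
  have \<tau>: "0 < \<tau>" using noise by (meson abs_ge_zero le_less_trans)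
  have c: "0 < 1 - (2 * real k - 1) * \<mu>"
    using margin_positive(1)[OF xm_pos \<tau> margin] .
  obtain i0 where i0: "i0 \<in> S" and largest: "\<forall>j\<in>S. \<bar>z $ j\<bar> \<le> \<bar>z $ i0\<bar>"
    using j0 ex_is_arg_min_if_finite[of S "\<lambda>j. - \<bar>z $ j\<bar>"]
    by (auto simp: is_arg_min_def not_less)
  define m where "m = \<bar>z $ i0\<bar>"
  have m: "xm \<le> m" using largest j0 xm_le by (auto simp: m_def)
  have on_support: "(1 - (real k - 1) * \<mu>) * m - \<tau> < \<bar>column i0 D \<bullet> (D *v z + w)\<bar>"
    using correlation_at_largest_entry[OF z card i0 largest] noise[rule_format, of i0]
    by (simp add: m_def inner_add_right)
  have off_support: "\<bar>column j D \<bullet> (D *v z + w)\<bar> < real k * \<mu> * m + \<tau>" if "j \<notin> S" for j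
    using correlation_off_support[OF z card that, of m] largest noise[rule_format, of j]
    by (simp add: m_def inner_add_right)
  have "xm * (1 - (2 * real k - 1) * \<mu>) \<le> m * (1 - (2 * real k - 1) * \<mu>)"
    using m c by (simp add: mult_right_mono)
  then have separated: "real k * \<mu> * m + \<tau> \<le> (1 - (real k - 1) * \<mu>) * m - \<tau>"
    using margin by (simp add: algebra_simps)
  have "l \<in> S"
  proof (rule ccontr)
    assume "l \<notin> S"
    then show False
      using off_support[of l] on_support separated greedy[rule_format, of i0] by linarith
  qed
  moreover have "0 \<le> real k * \<mu> * m" using mu_nonneg m xm_pos by simp
  then have "column l D \<bullet> (D *v z + w) \<noteq> 0"
    using on_support separated greedy[rule_format, of i0] \<tau> by linarith
  ultimately show ?thesis ..
qed

subsection \<open>Orthogonal Matching Pursuit\<close>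

lemma omp_run_supported:
  assumes "omp_run D y k idx xs" and "l \<le> k"
  shows "supported_on (idx ` {1..l}) (xs l)"
proof (cases "l = 0")
  case False
  then have "l \<in> {1..k}" using assms(2) by simp
  then show ?thesis using assms(1) unfolding omp_run_def supported_on_def by blast
qed (use assms(1) in \<open>simp add: omp_run_def supported_on_def\<close>)

lemma omp_run_greedy:
  assumes "omp_run D y k idx xs" and "l \<in> {1..k}"
  shows "\<forall>i. \<bar>column i D \<bullet> (y - D *v xs (l - 1))\<bar> \<le> \<bar>column (idx l) D \<bullet> (y - D *v xs (l - 1))\<bar>"
  using assms(1) bspec[OF _ assms(2)] unfolding omp_run_def by blast

lemma omp_run_orthogonal:
  assumes run: "omp_run D y k idx xs" and "l \<le> k" and i: "i \<in> idx ` {1..l}"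
  shows "column i D \<bullet> (y - D *v xs l) = 0"
proof (rule least_squares_residual_orthogonal[OF _ omp_run_supported[OF run \<open>l \<le> k\<close>] i])
  show "norm (column i D) = 1" using unit_cols by simp
  show "\<forall>z'. supported_on (idx ` {1..l}) z' \<longrightarrow> norm (y - D *v xs l) \<le> norm (y - D *v z')"
  proof -
    have "l \<in> {1..k}" using i \<open>l \<le> k\<close> by auto
    then show ?thesis using run unfolding omp_run_def supported_on_def by blast
  qed
qed

context
  fixes x :: "real^'n" and w :: "real^'l" and k :: nat and \<tau> xm :: real
    and idx :: "nat \<Rightarrow> 'n" and xs :: "nat \<Rightarrow> real^'n"
  assumes sparse: "card {j. x $ j \<noteq> 0} \<le> k"
    and xm_le: "\<forall>j. x $ j \<noteq> 0 \<longrightarrow> xm \<le> \<bar>x $ j\<bar>" and xm_pos: "0 < xm"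
    and noise: "\<forall>i. \<bar>column i D \<bullet> w\<bar> < \<tau>"
    and margin: "2 * \<tau> \<le> xm * (1 - (2 * real k - 1) * \<mu>)"
    and run: "omp_run D (D *v x + w) k idx xs"
begin

lemma omp_step_new_support_index:
  assumes l: "l \<in> {1..k}"
    and correct: "idx ` {1..l - 1} \<subseteq> {j. x $ j \<noteq> 0}"
    and incomplete: "\<not> {j. x $ j \<noteq> 0} \<subseteq> idx ` {1..l - 1}"
  shows "idx l \<in> {j. x $ j \<noteq> 0} - idx ` {1..l - 1}"
proof -
  define z where "z = x - xs (l - 1)"
  have residual: "D *v x + w - D *v xs (l - 1) = D *v z + w"
    by (simp add: z_def matrix_vector_mult_diff_distrib)
  have "supported_on (idx ` {1..l - 1}) (xs (l - 1))"
    by (rule omp_run_supported[OF run]) (use l in auto)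
  then have z_supp: "supported_on {j. x $ j \<noteq> 0} z"
    using correct by (auto simp: supported_on_def z_def)
  obtain j0 where j0: "j0 \<in> {j. x $ j \<noteq> 0}" "j0 \<notin> idx ` {1..l - 1}"
    using incomplete by auto
  then have "z $ j0 = x $ j0"
    using \<open>supported_on (idx ` {1..l - 1}) (xs (l - 1))\<close> by (simp add: z_def supported_on_def)
  then have "xm \<le> \<bar>z $ j0\<bar>" using xm_le j0 by simp
  moreover have "\<forall>i. \<bar>column i D \<bullet> (D *v z + w)\<bar> \<le> \<bar>column (idx l) D \<bullet> (D *v z + w)\<bar>"
    using omp_run_greedy[OF run l] unfolding residual .
  ultimately have chosen: "idx l \<in> {j. x $ j \<noteq> 0} \<and> column (idx l) D \<bullet> (D *v z + w) \<noteq> 0"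
    by (rule greedy_choice_in_support[OF z_supp sparse j0(1) _ xm_pos noise margin])
  have "idx l \<notin> idx ` {1..l - 1}"
  proof
    assume "idx l \<in> idx ` {1..l - 1}"
    then have "column (idx l) D \<bullet> (D *v x + w - D *v xs (l - 1)) = 0"
      using l by (intro omp_run_orthogonal[OF run]) auto
    then show False using chosen unfolding residual by simp
  qed
  with chosen show ?thesis by blast
qed

lemma omp_support_invariant:
  assumes "l \<le> k"
  shows "(idx ` {1..l} \<subseteq> {j. x $ j \<noteq> 0} \<and> card (idx ` {1..l}) = l)
         \<or> {j. x $ j \<noteq> 0} \<subseteq> idx ` {1..l}"
  using assms
proof (induction l)
  case (Suc l)
  have step: "idx ` {1..Suc l} = insert (idx (Suc l)) (idx ` {1..l})"
    by (simp add: atLeastAtMostSuc_conv)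
  show ?case
  proof (cases "{j. x $ j \<noteq> 0} \<subseteq> idx ` {1..l}")
    case False
    with Suc have correct: "idx ` {1..l} \<subseteq> {j. x $ j \<noteq> 0}" and
      card: "card (idx ` {1..l}) = l" by auto
    have "idx (Suc l) \<in> {j. x $ j \<noteq> 0} - idx ` {1..l}"
      using omp_step_new_support_index[of "Suc l"] Suc.prems False correct by simp
    then show ?thesis using correct card unfolding step by simp
  next
    case True
    then show ?thesis unfolding step by (simp add: subset_insertI2)
  qed
qed simp

lemma omp_recovers_support: "{j. x $ j \<noteq> 0} \<subseteq> idx ` {1..k}"
  using omp_support_invariant[of k]
proof
  assume "idx ` {1..k} \<subseteq> {j. x $ j \<noteq> 0} \<and> card (idx ` {1..k}) = k"
  then have "idx ` {1..k} = {j. x $ j \<noteq> 0}"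
    using sparse by (intro card_seteq) auto
  then show ?thesis by simp
qed simp

text \<open>The error e = x^k - x lives on the chosen set S, where the residual
  equations give ||D e||^2 = sum e_i (d_i . w) <= tau ||e||_1; the Gram bound and
  Cauchy-Schwarz ||e||_1^2 <= k ||e||^2 then control ||e||^2.\<close>
lemma omp_error_bound: "(norm (xs k - x))\<^sup>2 \<le> real k * \<tau>\<^sup>2 / (1 - (real k - 1) * \<mu>)\<^sup>2"
proof -
  define S where "S = idx ` {1..k}"
  define e where "e = xs k - x"
  have e: "supported_on S e"
    using omp_run_supported[OF run, of k] omp_recovers_support
    by (auto simp: S_def e_def supported_on_def)
  have card: "card S \<le> k" unfolding S_def using card_image_le[of "{1..k}" idx] by simp
  have \<tau>: "0 < \<tau>" using noise by (meson abs_ge_zero le_less_trans)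
  have c: "0 < 1 - (real k - 1) * \<mu>"
    using margin_positive(2)[OF xm_pos \<tau> margin] .
  have residual_eq: "column i D \<bullet> (D *v e) = column i D \<bullet> w" if "i \<in> S" for i
    using omp_run_orthogonal[OF run _ that[unfolded S_def]]
    by (simp add: e_def matrix_vector_mult_diff_distrib inner_diff_right inner_add_right)
  have "(D *v e) \<bullet> (D *v e) = (\<Sum>i\<in>S. e $ i * ((D *v e) \<bullet> column i D))"
    by (rule inner_matrix_vector_supported[OF e])
  also have "\<dots> = (\<Sum>i\<in>S. e $ i * (column i D \<bullet> w))"
    using residual_eq by (intro sum.cong) (simp_all add: inner_commute)
  also have "\<dots> \<le> (\<Sum>i\<in>S. \<tau> * \<bar>e $ i\<bar>)"
  proof (rule sum_mono)
    fix i
    have "e $ i * (column i D \<bullet> w) \<le> \<bar>e $ i\<bar> * \<bar>column i D \<bullet> w\<bar>"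
      by (metis abs_ge_self abs_mult)
    also have "\<dots> \<le> \<bar>e $ i\<bar> * \<tau>"
      using noise by (intro mult_left_mono) (auto simp: less_imp_le)
    finally show "e $ i * (column i D \<bullet> w) \<le> \<tau> * \<bar>e $ i\<bar>" by (simp add: mult.commute)
  qed
  finally have energy_upper: "(D *v e) \<bullet> (D *v e) \<le> \<tau> * (\<Sum>i\<in>S. \<bar>e $ i\<bar>)"
    by (simp add: sum_distrib_left)
  have "(1 - (real k - 1) * \<mu>) * (\<Sum>j\<in>S. (e $ j)\<^sup>2)
        \<le> (1 - (real (card S) - 1) * \<mu>) * (\<Sum>j\<in>S. (e $ j)\<^sup>2)"
    using card mu_nonneg by (intro mult_right_mono) (auto intro!: mult_right_mono sum_nonneg)
  also have "\<dots> \<le> (D *v e) \<bullet> (D *v e)" by (rule gram_lower_bound[OF e])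
  finally have energy_lower: "(1 - (real k - 1) * \<mu>) * (\<Sum>j\<in>S. (e $ j)\<^sup>2) \<le> (D *v e) \<bullet> (D *v e)" .
  have "(\<Sum>j\<in>S. \<bar>e $ j\<bar>)\<^sup>2 \<le> (\<Sum>j\<in>S. (e $ j)\<^sup>2) * card S"
    using sum_squared_le_sum_of_squares[of "\<lambda>j. \<bar>e $ j\<bar>" S] by simp
  also have "\<dots> \<le> real k * (\<Sum>j\<in>S. (e $ j)\<^sup>2)"
    using card by (simp add: mult.commute mult_right_mono sum_nonneg)
  finally have "(\<Sum>j\<in>S. (e $ j)\<^sup>2) \<le> real k * \<tau>\<^sup>2 / (1 - (real k - 1) * \<mu>)\<^sup>2"
    using quadratic_energy_bound[OF c sum_nonneg _ order_trans[OF energy_lower energy_upper]] by simp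
  then show ?thesis using norm_supported_squared[OF e] by (simp add: e_def)
qed

end

end

subsection \<open>The recovery theorem\<close>

lemma coherence_bound:
  fixes D :: "real^'n^'l"
  assumes "i \<noteq> j"
  shows "\<bar>column i D \<bullet> column j D\<bar> \<le> coherence D"
proof -
  have "{\<bar>column i D \<bullet> column j D\<bar> | i j. i \<noteq> j}
        \<subseteq> (\<lambda>(i, j). \<bar>column i D \<bullet> column j D\<bar>) ` UNIV" by auto
  then have "finite {\<bar>column i D \<bullet> column j D\<bar> | i j. i \<noteq> j}" by (rule finite_subset) simp
  then show ?thesis using assms unfolding coherence_def by (auto intro!: Max_ge)
qed

lemma coherence_nonneg:
  fixes D :: "real^'n^'l"
  assumes "CARD('n) \<ge> 2"
  shows "0 \<le> coherence D"
proof -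
  obtain i j :: 'n where "i \<noteq> j"
    using assms by (metis card_2_iff' card_le_Suc0_iff_eq finite not_less_eq_eq numeral_2_eq_2)
  then show ?thesis using coherence_bound by (meson abs_ge_zero order_trans)
qed

lemma xmin_le: "x $ j \<noteq> 0 \<Longrightarrow> xmin x \<le> \<bar>x $ j\<bar>"
  unfolding xmin_def by (rule Min_le) auto

lemma xmin_pos:
  assumes "x \<noteq> 0"
  shows "0 < xmin x"
proof -
  have "{\<bar>x $ j\<bar> | j. x $ j \<noteq> 0} \<noteq> {}" using assms by (auto simp: vec_eq_iff)
  then have "xmin x \<in> {\<bar>x $ j\<bar> | j. x $ j \<noteq> 0}" unfolding xmin_def by (intro Min_in) auto
  then show ?thesis by auto
qed

theorem mainTheorem6:
  fixes D :: "real^'n^'l" and x :: "real^'n" and k :: nat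
    and \<sigma> \<alpha> :: real and M :: "'a measure" and W :: "'a \<Rightarrow> real^'l"
  assumes unit_cols: "\<forall>i. norm (column i D) = 1"
    and LN: "CARD('l) < CARD('n)"
    and indep: "cols_indep_upto D k"
    and x_nz: "x \<noteq> 0"
    and x_sparse: "card {j. x $ j \<noteq> 0} \<le> k"
    and PS: "prob_space M"
    and sigma_pos: "\<sigma> > 0"
    and W_indep: "prob_space.indep_vars M (\<lambda>_. borel) (\<lambda>i \<omega>. W \<omega> $ i) UNIV"
    and W_normal: "\<forall>i. distributed M lborel (\<lambda>\<omega>. W \<omega> $ i) (normal_density 0 \<sigma>)"
    and alpha: "\<alpha> > 1"
    and cond: "xmin x * (1 - (2 * real k - 1) * coherence D)
                 \<ge> 2 * \<sigma> * sqrt (2 * \<alpha> * ln (real CARD('n)))"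
  shows "\<exists>E \<in> sets M.
           measure M E > 1 - (0.8 / sqrt 2) /
              (real CARD('n) powr (\<alpha> - 1) * sqrt (\<alpha> * ln (real CARD('n)))) \<and>
           (\<forall>\<omega>\<in>E. \<forall>idx xs. omp_run D (D *v x + W \<omega>) k idx xs \<longrightarrow>
              {j. x $ j \<noteq> 0} \<subseteq> idx ` {1..k} \<and>
              (norm (xs k - x))\<^sup>2 \<le>
                2 * \<alpha> / (1 - (real k - 1) * coherence D)\<^sup>2 * real k * \<sigma>\<^sup>2
                  * ln (real CARD('n)))"
proof -
  define N where "N = real CARD('n)"
  define \<tau> where "\<tau> = \<sigma> * sqrt (2 * \<alpha> * ln N)"
  have "0 < CARD('l)" by simp
  then have card_n: "CARD('n) \<ge> 2" using LN by linarith
  then have N: "N \<ge> 2" by (simp add: N_def)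
  then have \<tau>: "\<tau> > 0" "\<tau>\<^sup>2 = 2 * \<alpha> * \<sigma>\<^sup>2 * ln N"
    using sigma_pos alpha by (auto simp: \<tau>_def power_mult_distrib)
  obtain E where E: "E \<in> sets M" "1 - N * normal_tail_bound \<sigma> \<tau> \<le> measure M E"
      and small_noise: "\<forall>\<omega>\<in>E. \<forall>i. \<bar>column i D \<bullet> W \<omega>\<bar> < \<tau>"
    using noise_correlations_bounded[OF PS sigma_pos \<tau>(1) W_indep W_normal unit_cols]
    unfolding N_def by blast
  have coherence: "\<forall>i j. i \<noteq> j \<longrightarrow> \<bar>column i D \<bullet> column j D\<bar> \<le> coherence D"
    using coherence_bound by blast
  have xmin: "\<forall>j. x $ j \<noteq> 0 \<longrightarrow> xmin x \<le> \<bar>x $ j\<bar>"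
    using xmin_le by blast
  have margin: "2 * \<tau> \<le> xmin x * (1 - (2 * real k - 1) * coherence D)"
    using cond by (simp add: \<tau>_def N_def mult.assoc)
  have omp_guarantee: "{j. x $ j \<noteq> 0} \<subseteq> idx ` {1..k} \<and>
      (norm (xs k - x))\<^sup>2 \<le> real k * \<tau>\<^sup>2 / (1 - (real k - 1) * coherence D)\<^sup>2"
    if "\<omega> \<in> E" and "omp_run D (D *v x + W \<omega>) k idx xs" for \<omega> idx xs
  proof -
    note hyps = unit_cols coherence coherence_nonneg[OF card_n] x_sparse xmin
      xmin_pos[OF x_nz] bspec[OF small_noise that(1)] margin that(2)
    show ?thesis using omp_recovers_support[OF hyps] omp_error_bound[OF hyps] by blast
  qed
  show ?thesis
  proof (intro bexI[OF _ E(1)] conjI)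
    show "measure M E > 1 - (0.8 / sqrt 2) /
            (real CARD('n) powr (\<alpha> - 1) * sqrt (\<alpha> * ln (real CARD('n))))"
      using union_bound_at_threshold[OF N sigma_pos alpha \<tau>_def] E(2) unfolding N_def by simp
    show "\<forall>\<omega>\<in>E. \<forall>idx xs. omp_run D (D *v x + W \<omega>) k idx xs \<longrightarrow>
        {j. x $ j \<noteq> 0} \<subseteq> idx ` {1..k} \<and>
        (norm (xs k - x))\<^sup>2 \<le> 2 * \<alpha> / (1 - (real k - 1) * coherence D)\<^sup>2 * real k * \<sigma>\<^sup>2
          * ln (real CARD('n))"
      using omp_guarantee by (simp add: \<tau>(2) N_def mult_ac)
  qed
qed

end
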